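(* Consider a weighted stochastic block model on vertex set $A\cup B$, where $A$ and $B$ are the two true communities, each of size $n$, and each pair $(i,j)$ receives an observed weight $w_{ij}$, drawn from $p_n$ if $i,j$ are in the same community and from $q_n$ otherwise. Let $d_n(x)=\log\frac{p_n(x)}{q_n(x)}$, and for disjoint vertex sets $\hat A,\hat B$ let $\mathcal S(\hat A,\hat B)=\sum_{i\in\hat A,\,j\in\hat B}d_n(w_{ij})$. If the maximum likelihood estimator of the community assignment does not coincide with the truth, then there exist an integer $1\le k\le\frac n2$ and sets $A_w\subset A$, $B_w\subset B$ with $|A_w|=|B_w|=k$ such that \[ \mathcal S(A_w,\bar A_w)+\mathcal S(B_w,\bar B_w)\le \mathcal S(A_w,\bar B_w)+\mathcal S(\bar A_w,B_w), \] where $\bar A_w=A\setminus A_w$ and $\bar B_w=B\setminus B_w$.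
   Context: $p_n$ and $q_n$ are mutually absolutely continuous (so that $d_n$ is well defined); they may be densities of continuous distributions or probability mass functions. *)

theory Defs
  imports Complex_Main
begin

text \<open>Unordered vertex pairs of V (each pair {i,j}, i \<noteq> j, receives one observed weight w {i,j}).\<close>
definition vpairs :: "'v set \<Rightarrow> 'v set set" where
  "vpairs V = {{i, j} | i j. i \<in> V \<and> j \<in> V \<and> i \<noteq> j}"

definition llr :: "('x \<Rightarrow> real) \<Rightarrow> ('x \<Rightarrow> real) \<Rightarrow> 'x \<Rightarrow> real" where
  "llr p q x = ln (p x / q x)"

definition Sscore :: "('x \<Rightarrow> real) \<Rightarrow> ('x \<Rightarrow> real) \<Rightarrow> ('v set \<Rightarrow> 'x) \<Rightarrow> 'v set \<Rightarrow> 'v set \<Rightarrow> real" where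
  "Sscore p q w Ah Bh = (\<Sum>i\<in>Ah. \<Sum>j\<in>Bh. llr p q (w {i, j}))"

definition balanced_partition :: "'v set \<Rightarrow> nat \<Rightarrow> 'v set \<Rightarrow> 'v set \<Rightarrow> bool" where
  "balanced_partition V n A' B' \<longleftrightarrow>
     A' \<inter> B' = {} \<and> A' \<union> B' = V \<and> card A' = n \<and> card B' = n"

definition likelihood :: "('x \<Rightarrow> real) \<Rightarrow> ('x \<Rightarrow> real) \<Rightarrow> ('v set \<Rightarrow> 'x) \<Rightarrow> 'v set \<Rightarrow> 'v set \<Rightarrow> real" where
  "likelihood p q w A' B' =
     (\<Prod>e\<in>vpairs (A' \<union> B'). (if e \<subseteq> A' \<or> e \<subseteq> B' then p (w e) else q (w e)))"

definition is_mle :: "('x \<Rightarrow> real) \<Rightarrow> ('x \<Rightarrow> real) \<Rightarrow> ('v set \<Rightarrow> 'x) \<Rightarrow> 'v set \<Rightarrow> nat \<Rightarrow> 'v set \<Rightarrow> 'v set \<Rightarrow> bool" where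
  "is_mle p q w V n A' B' \<longleftrightarrow>
     balanced_partition V n A' B' \<and>
     (\<forall>A'' B''. balanced_partition V n A'' B'' \<longrightarrow> likelihood p q w A'' B'' \<le> likelihood p q w A' B')"

end

theory Submission
  imports Defs
begin

text \<open>
  The log-likelihood of a partition (X, Y) equals a term independent of the partition plus
  half of T(X) + T(Y), where T(Z) sums d_n(w_ij) over ordered pairs of distinct vertices of Z.
  Write the misclassified vertices of an MLE (A', B') as A_w = A \<inter> B' and B_w = B \<inter> A'.
  Splitting T(A), T(B), T(A') and T(B') along A = A_w \<union> (A - A_w), B = B_w \<union> (B - B_w),
  the within-block terms cancel in T(A) + T(B) \<le> T(A') + T(B') and what remains is the
  claimed inequality. Both sets have the same size k, which is nonzero when the MLE differs
  from the truth; exchanging the labels of A' and B' replaces k by n - k, so k \<le> n/2 may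
  be assumed.
\<close>

definition within_score :: "('x \<Rightarrow> real) \<Rightarrow> ('x \<Rightarrow> real) \<Rightarrow> ('v set \<Rightarrow> 'x) \<Rightarrow> 'v set \<Rightarrow> real" where
  "within_score p q w X = (\<Sum>i\<in>X. \<Sum>j\<in>X - {i}. llr p q (w {i, j}))"

lemma finite_vpairs: "finite V \<Longrightarrow> finite (vpairs V)"
  by (rule finite_subset[of _ "Pow V"]) (auto simp: vpairs_def)

lemma sum_ordered_pairs_eq_vpairs:
  fixes h :: "'v set \<Rightarrow> 'a :: comm_semiring_1"
  assumes fin: "finite X"
  shows "(\<Sum>i\<in>X. \<Sum>j\<in>X - {i}. h {i, j}) = 2 * (\<Sum>e\<in>vpairs X. h e)"
proof -
  define P where "P = Sigma X (\<lambda>i. X - {i})"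
  define f where "f = (\<lambda>(i :: 'v, j). {i, j})"
  have "(\<Sum>i\<in>X. \<Sum>j\<in>X - {i}. h {i, j}) = (\<Sum>x\<in>P. h (f x))"
    unfolding P_def f_def using fin by (simp add: sum.Sigma split_def)
  also have "\<dots> = (\<Sum>y\<in>f ` P. \<Sum>x\<in>{x \<in> P. f x = y}. h (f x))"
    by (rule sum.image_gen) (use fin in \<open>simp add: P_def\<close>)
  also have "\<dots> = (\<Sum>y\<in>f ` P. 2 * h y)"
  proof (rule sum.cong[OF refl])
    fix y assume "y \<in> f ` P"
    then obtain i j where ij: "i \<in> X" "j \<in> X" "i \<noteq> j" "y = {i, j}"
      unfolding P_def f_def by auto
    then have "{x \<in> P. f x = y} = {(i, j), (j, i)}"
      unfolding P_def f_def by (auto simp: doubleton_eq_iff)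
    with ij show "(\<Sum>x\<in>{x \<in> P. f x = y}. h (f x)) = 2 * h y"
      unfolding f_def by (simp add: insert_commute mult_2)
  qed
  also have "f ` P = vpairs X"
    unfolding P_def f_def vpairs_def by auto
  finally show ?thesis by (simp add: sum_distrib_left)
qed

lemma Sscore_commute: "Sscore p q w Z X = Sscore p q w X Z"
  unfolding Sscore_def by (subst sum.swap) (simp add: insert_commute)

lemma within_score_Un:
  assumes "finite X" "finite Z" "X \<inter> Z = {}"
  shows "within_score p q w (X \<union> Z) =
           within_score p q w X + within_score p q w Z + 2 * Sscore p q w X Z"
proof -
  let ?h = "\<lambda>i j. llr p q (w {i, j})"
  have left: "(\<Sum>j\<in>(X \<union> Z) - {i}. ?h i j) = (\<Sum>j\<in>X - {i}. ?h i j) + (\<Sum>j\<in>Z. ?h i j)"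
    if "i \<in> X" for i
  proof -
    have split: "(X \<union> Z) - {i} = (X - {i}) \<union> Z" using that assms by auto
    show ?thesis using assms by (subst split, subst sum.union_disjoint) auto
  qed
  have right: "(\<Sum>j\<in>(X \<union> Z) - {i}. ?h i j) = (\<Sum>j\<in>X. ?h i j) + (\<Sum>j\<in>Z - {i}. ?h i j)"
    if "i \<in> Z" for i
  proof -
    have split: "(X \<union> Z) - {i} = X \<union> (Z - {i})" using that assms by auto
    show ?thesis using assms by (subst split, subst sum.union_disjoint) auto
  qed
  have "within_score p q w (X \<union> Z) =
          (\<Sum>i\<in>X. \<Sum>j\<in>(X \<union> Z) - {i}. ?h i j) + (\<Sum>i\<in>Z. \<Sum>j\<in>(X \<union> Z) - {i}. ?h i j)"
    unfolding within_score_def using assms by (simp add: sum.union_disjoint)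
  also have "\<dots> = within_score p q w X + Sscore p q w X Z + (Sscore p q w Z X + within_score p q w Z)"
    unfolding within_score_def Sscore_def by (simp add: left right sum.distrib cong: sum.cong)
  finally show ?thesis by (simp add: Sscore_commute)
qed

lemma likelihood_pos:
  assumes "\<forall>e\<in>vpairs (X \<union> Y). p (w e) > 0 \<and> q (w e) > 0"
  shows "likelihood p q w X Y > 0"
  unfolding likelihood_def using assms by (intro prod_pos) auto

lemma likelihood_commute: "likelihood p q w X Y = likelihood p q w Y X"
  unfolding likelihood_def by (simp add: Un_commute disj_commute)

lemma ln_likelihood:
  assumes fin: "finite V" and XY: "X \<inter> Y = {}" "X \<union> Y = V"
    and pos: "\<forall>e\<in>vpairs V. p (w e) > 0 \<and> q (w e) > 0"
  shows "ln (likelihood p q w X Y) =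
           (\<Sum>e\<in>vpairs V. ln (q (w e))) + (within_score p q w X + within_score p q w Y) / 2"
proof -
  let ?h = "\<lambda>e. llr p q (w e)"
  have fv: "finite (vpairs V)" using fin by (rule finite_vpairs)
  have finXY: "finite X" "finite Y" using fin XY by auto
  have "ln (likelihood p q w X Y) =
          (\<Sum>e\<in>vpairs V. ln (if e \<subseteq> X \<or> e \<subseteq> Y then p (w e) else q (w e)))"
    unfolding likelihood_def using XY pos fv by (subst ln_prod) auto
  also have "\<dots> = (\<Sum>e\<in>vpairs V. ln (q (w e)) + (if e \<subseteq> X \<or> e \<subseteq> Y then ?h e else 0))"
    using pos by (intro sum.cong) (auto simp: llr_def ln_div)
  also have "\<dots> = (\<Sum>e\<in>vpairs V. ln (q (w e))) + (\<Sum>e\<in>{e \<in> vpairs V. e \<subseteq> X \<or> e \<subseteq> Y}. ?h e)"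
    using fv by (simp add: sum.distrib sum.inter_filter)
  also have "{e \<in> vpairs V. e \<subseteq> X \<or> e \<subseteq> Y} = vpairs X \<union> vpairs Y"
    using XY unfolding vpairs_def by auto
  also have "(\<Sum>e\<in>vpairs X \<union> vpairs Y. ?h e) = (\<Sum>e\<in>vpairs X. ?h e) + (\<Sum>e\<in>vpairs Y. ?h e)"
    using finXY XY by (intro sum.union_disjoint finite_vpairs) (auto simp: vpairs_def doubleton_eq_iff)
  also have "\<dots> = (within_score p q w X + within_score p q w Y) / 2"
    unfolding within_score_def
    using sum_ordered_pairs_eq_vpairs[OF finXY(1), of ?h] sum_ordered_pairs_eq_vpairs[OF finXY(2), of ?h]
    by simp
  finally show ?thesis .
qed

lemma within_score_le_of_likelihood_le:
  assumes fin: "finite A" "finite B" and AB: "A \<inter> B = {}"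
    and XY: "X \<inter> Y = {}" "X \<union> Y = A \<union> B"
    and pos: "\<forall>e\<in>vpairs (A \<union> B). p (w e) > 0 \<and> q (w e) > 0"
    and le: "likelihood p q w A B \<le> likelihood p q w X Y"
  shows "within_score p q w A + within_score p q w B \<le> within_score p q w X + within_score p q w Y"
proof -
  have "ln (likelihood p q w A B) \<le> ln (likelihood p q w X Y)"
    using le likelihood_pos[of A B p w q] likelihood_pos[of X Y p w q] pos XY by simp
  then show ?thesis
    using ln_likelihood[of "A \<union> B" A B p w q] ln_likelihood[of "A \<union> B" X Y p w q] fin AB XY pos
    by simp
qed

lemma exchange_inequality_of_likelihood_le:
  assumes fin: "finite A" "finite B" and AB: "A \<inter> B = {}"
    and XY: "X \<inter> Y = {}" "X \<union> Y = A \<union> B"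
    and pos: "\<forall>e\<in>vpairs (A \<union> B). p (w e) > 0 \<and> q (w e) > 0"
    and le: "likelihood p q w A B \<le> likelihood p q w X Y"
  shows "Sscore p q w (A \<inter> Y) (A - A \<inter> Y) + Sscore p q w (B \<inter> X) (B - B \<inter> X)
           \<le> Sscore p q w (A \<inter> Y) (B - B \<inter> X) + Sscore p q w (A - A \<inter> Y) (B \<inter> X)"
proof -
  define Aw Bw where "Aw = A \<inter> Y" and "Bw = B \<inter> X"
  let ?T = "within_score p q w" and ?S = "Sscore p q w"
  have fins: "finite Aw" "finite Bw" "finite (A - Aw)" "finite (B - Bw)"
    using fin unfolding Aw_def Bw_def by auto
  have disj: "Aw \<inter> (A - Aw) = {}" "Bw \<inter> (B - Bw) = {}" "(A - Aw) \<inter> Bw = {}" "(B - Bw) \<inter> Aw = {}"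
    using AB unfolding Aw_def Bw_def by auto
  have unions: "Aw \<union> (A - Aw) = A" "Bw \<union> (B - Bw) = B" "(A - Aw) \<union> Bw = X" "(B - Bw) \<union> Aw = Y"
    using XY AB unfolding Aw_def Bw_def by auto
  have "?T A = ?T Aw + ?T (A - Aw) + 2 * ?S Aw (A - Aw)"
    using within_score_Un[of Aw "A - Aw" p q w] fins disj unions by simp
  moreover have "?T B = ?T Bw + ?T (B - Bw) + 2 * ?S Bw (B - Bw)"
    using within_score_Un[of Bw "B - Bw" p q w] fins disj unions by simp
  moreover have "?T X = ?T (A - Aw) + ?T Bw + 2 * ?S (A - Aw) Bw"
    using within_score_Un[of "A - Aw" Bw p q w] fins disj unions by simp
  moreover have "?T Y = ?T (B - Bw) + ?T Aw + 2 * ?S Aw (B - Bw)"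
    using within_score_Un[of "B - Bw" Aw p q w] Sscore_commute[of p q w "B - Bw" Aw] fins disj unions
    by simp
  ultimately show ?thesis
    using within_score_le_of_likelihood_le[OF fin AB XY pos le]
    unfolding Aw_def[symmetric] Bw_def[symmetric] by linarith
qed

lemma balanced_partition_card_cross:
  assumes "finite A" "finite B"
    and "balanced_partition (A \<union> B) n A B" "balanced_partition (A \<union> B) n X Y"
  shows "card (B \<inter> X) = card (A \<inter> Y)" and "card (A \<inter> X) + card (A \<inter> Y) = n"
proof -
  have cards: "card A = n" "card X = n"
    and parts: "A \<inter> B = {}" "X \<inter> Y = {}" "X \<union> Y = A \<union> B"
    using assms(3,4) unfolding balanced_partition_def by auto
  have "A = (A \<inter> X) \<union> (A \<inter> Y)" "X = (A \<inter> X) \<union> (B \<inter> X)"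
    using parts by auto
  moreover have "card ((A \<inter> X) \<union> (A \<inter> Y)) = card (A \<inter> X) + card (A \<inter> Y)"
    using assms(1) parts by (intro card_Un_disjoint) auto
  moreover have "card ((A \<inter> X) \<union> (B \<inter> X)) = card (A \<inter> X) + card (B \<inter> X)"
    using assms(1,2) parts by (intro card_Un_disjoint) auto
  ultimately have "card A = card (A \<inter> X) + card (A \<inter> Y)" "card X = card (A \<inter> X) + card (B \<inter> X)"
    by simp_all
  with cards show "card (B \<inter> X) = card (A \<inter> Y)" "card (A \<inter> X) + card (A \<inter> Y) = n"
    by auto
qed

lemma balanced_partition_eq_if_cross_empty:
  assumes "finite A" "finite B"
    and "balanced_partition (A \<union> B) n A B" "balanced_partition (A \<union> B) n X Y"
    and "A \<inter> Y = {}"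
  shows "X = A" and "Y = B"
proof -
  have parts: "A \<inter> B = {}" "X \<inter> Y = {}" "X \<union> Y = A \<union> B" and "card A = card X"
    using assms(3,4) unfolding balanced_partition_def by auto
  moreover have "A \<subseteq> X" using parts assms(5) by auto
  moreover have "finite X" using parts assms(1,2) by (metis finite_Un)
  ultimately show "X = A" by (metis card_subset_eq)
  with parts show "Y = B" by auto
qed

lemma exchange_inequality_of_balanced_partition:
  assumes fin: "finite A" "finite B"
    and truth: "balanced_partition (A \<union> B) n A B"
    and part: "balanced_partition (A \<union> B) n X Y"
    and pos: "\<forall>e\<in>vpairs (A \<union> B). p (w e) > 0 \<and> q (w e) > 0"
    and le: "likelihood p q w A B \<le> likelihood p q w X Y"
    and ne: "(X, Y) \<noteq> (A, B)"
  shows "\<exists>Aw Bw. 1 \<le> card (A \<inter> Y) \<and> Aw \<subseteq> A \<and> Bw \<subseteq> B \<and>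
           card Aw = card (A \<inter> Y) \<and> card Bw = card (A \<inter> Y) \<and>
           Sscore p q w Aw (A - Aw) + Sscore p q w Bw (B - Bw)
             \<le> Sscore p q w Aw (B - Bw) + Sscore p q w (A - Aw) Bw"
proof -
  have "A \<inter> Y \<noteq> {}"
    using balanced_partition_eq_if_cross_empty[OF fin truth part] ne by auto
  then have "1 \<le> card (A \<inter> Y)"
    using fin by (simp add: Suc_le_eq card_gt_0_iff)
  moreover have "card (B \<inter> X) = card (A \<inter> Y)"
    by (rule balanced_partition_card_cross(1)[OF fin truth part])
  moreover have "Sscore p q w (A \<inter> Y) (A - A \<inter> Y) + Sscore p q w (B \<inter> X) (B - B \<inter> X)
      \<le> Sscore p q w (A \<inter> Y) (B - B \<inter> X) + Sscore p q w (A - A \<inter> Y) (B \<inter> X)"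
    using truth part fin pos le
    by (intro exchange_inequality_of_likelihood_le) (auto simp: balanced_partition_def)
  ultimately show ?thesis
    by (intro exI[of _ "A \<inter> Y"] exI[of _ "B \<inter> X"]) simp
qed

theorem lemma1:
  fixes A B :: "'v set" and n :: nat
    and p q :: "'x \<Rightarrow> real" and w :: "'v set \<Rightarrow> 'x"
    and A' B' :: "'v set"
  assumes "finite A" and "finite B" and "A \<inter> B = {}"
    and "card A = n" and "card B = n"
    and "\<forall>e\<in>vpairs (A \<union> B). p (w e) > 0 \<and> q (w e) > 0"
    and "is_mle p q w (A \<union> B) n A' B'"
    and "{A', B'} \<noteq> {A, B}"
  shows "\<exists>k Aw Bw. 1 \<le> k \<and> 2 * k \<le> n \<and> Aw \<subseteq> A \<and> Bw \<subseteq> B \<and>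
           card Aw = k \<and> card Bw = k \<and>
           Sscore p q w Aw (A - Aw) + Sscore p q w Bw (B - Bw)
             \<le> Sscore p q w Aw (B - Bw) + Sscore p q w (A - Aw) Bw"
proof -
  have truth: "balanced_partition (A \<union> B) n A B"
    using assms(3-5) unfolding balanced_partition_def by auto
  have mle: "balanced_partition (A \<union> B) n A' B'" "balanced_partition (A \<union> B) n B' A'"
    using assms(7) by (auto simp: is_mle_def balanced_partition_def)
  have le: "likelihood p q w A B \<le> likelihood p q w A' B'"
           "likelihood p q w A B \<le> likelihood p q w B' A'"
    using assms(7) truth by (auto simp: is_mle_def likelihood_commute[of p q w B'])
  have ne: "(A', B') \<noteq> (A, B)" "(B', A') \<noteq> (A, B)"
    using assms(8) by (auto simp: insert_commute)
  note exchange =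
    exchange_inequality_of_balanced_partition[where p = p and q = q and w = w, OF assms(1,2) truth]
  have "card (A \<inter> A') + card (A \<inter> B') = n"
    by (rule balanced_partition_card_cross(2)[OF assms(1,2) truth mle(1)])
  then consider "2 * card (A \<inter> B') \<le> n" | "2 * card (A \<inter> A') \<le> n"
    by linarith
  then show ?thesis
  proof cases
    case 1
    with exchange[OF mle(1) assms(6) le(1) ne(1)] show ?thesis
      by (intro exI[of _ "card (A \<inter> B')"]) simp
  next
    case 2
    with exchange[OF mle(2) assms(6) le(2) ne(2)] show ?thesis
      by (intro exI[of _ "card (A \<inter> A')"]) simp
  qed
qed

end
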